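(* Let $\mathcal O,K,k,\nu$ be as in the context. Let $D\in\mathcal O[X]$ have degree $4$, with leading coefficient a unit of $\mathcal O$ that is a square in $K$, such that the continued fraction of $\sqrt D$ over $K$ is not periodic and the reduction $\bar D\in k[X]$ is not a square. Let $\alpha_n$ be the complete quotients of $\sqrt D$ over $K$. Then the continued fraction of $\sqrt D$ has bad reduction at $\nu$ (i.e. $\alpha_n\notin\mathcal O((X^{-1}))$ for some $n\ge1$) if and only if the continued fraction of $\sqrt{\bar D}=\overline{\sqrt D}$ over $k$ is periodic.
   Context: $\mathcal O$ is a discrete valuation ring with fraction field $K$, valuation $\nu$, residue field $k$ of characteristic $\ne2$; bars denote coefficientwise reduction. The square root $\sqrt D\in K((X^{-1}))$ then has coefficients in $\mathcal O$ and reduces to a square root of $\bar D$. $\mathcal O((X^{-1}))$ denotes Laurent series $\sum_{n\le N}u_nX^n$ with all $u_n\in\mathcal O$; $\operatorname{ord}(\sum_{n\le N}u_nX^n)=-N$ if $u_N\ne0$; $\lfloor\beta\rfloor$ is the unique polynomial with $\operatorname{ord}(\beta-\lfloor\beta\rfloor)>0$. Continued fraction: $\alpha_0=\alpha$, $\alpha_{n+1}=1/(\alpha_n-\lfloor\alpha_n\rfloor)$, $a_n=\lfloor\alpha_n\rfloor$; periodic: $a_n=a_{n+l}$ for all $n\ge m$, for some $m\ge0,l\ge1$. *)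

theory Defs
  imports "HOL-Computational_Algebra.Computational_Algebra"
begin

text \<open>Laurent series in X^{-1} are modelled as formal Laurent series in the
variable T = X^{-1} (type 'a fls). A series sum over n at most N of u_n X^n
is the fls with coefficient u_n at T^(-n). Thus "ord" of the paper is
fls_subdegree, and polynomials in X are the fls supported on nonpositive
T-exponents.\<close>

definition poly_to_fls_Xinv :: "'a::field poly \<Rightarrow> 'a fls" where
  "poly_to_fls_Xinv p = (\<Sum>i\<le>degree p. fls_const (coeff p i) * fls_X_inv ^ i)"

text \<open>Polynomial part: the unique polynomial with ord(beta - floor beta) > 0,
i.e. keep the terms X^n with n \<ge> 0 (T-exponent \<le> 0).\<close>
lift_definition fls_floor :: "'a::zero fls \<Rightarrow> 'a fls" is
  "\<lambda>f n. if n \<le> 0 then f n else 0"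
  by (auto elim: eventually_mono)

primrec cf_alpha :: "'a::field fls \<Rightarrow> nat \<Rightarrow> 'a fls" where
  "cf_alpha \<alpha> 0 = \<alpha>"
| "cf_alpha \<alpha> (Suc n) = inverse (cf_alpha \<alpha> n - fls_floor (cf_alpha \<alpha> n))"

definition cf_quot :: "'a::field fls \<Rightarrow> nat \<Rightarrow> 'a fls" where
  "cf_quot \<alpha> n = fls_floor (cf_alpha \<alpha> n)"

definition cf_periodic :: "'a::field fls \<Rightarrow> bool" where
  "cf_periodic \<alpha> \<longleftrightarrow> (\<exists>m l. l \<ge> 1 \<and> (\<forall>n\<ge>m. cf_quot \<alpha> n = cf_quot \<alpha> (n + l)))"

text \<open>Discrete (normalised) valuation nu on the field K; the value of nu at 0 is irrelevant.\<close>
definition discrete_valuation :: "('a::field \<Rightarrow> int) \<Rightarrow> bool" where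
  "discrete_valuation \<nu> \<longleftrightarrow>
     (\<forall>x y. x \<noteq> 0 \<longrightarrow> y \<noteq> 0 \<longrightarrow> \<nu> (x * y) = \<nu> x + \<nu> y) \<and>
     (\<forall>x y. x \<noteq> 0 \<longrightarrow> y \<noteq> 0 \<longrightarrow> x + y \<noteq> 0 \<longrightarrow> \<nu> (x + y) \<ge> min (\<nu> x) (\<nu> y)) \<and>
     (\<exists>\<pi>. \<pi> \<noteq> 0 \<and> \<nu> \<pi> = 1)"

definition val_ring :: "('a::field \<Rightarrow> int) \<Rightarrow> 'a set" where
  "val_ring \<nu> = {x. x = 0 \<or> \<nu> x \<ge> 0}"

text \<open>red is a reduction map: a surjective ring homomorphism from O onto the
field k whose kernel is the maximal ideal {x. x = 0 or nu x > 0};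
so k is (isomorphic to) the residue field O/m.\<close>
definition residue_map :: "('a::field \<Rightarrow> int) \<Rightarrow> ('a \<Rightarrow> 'b::field) \<Rightarrow> bool" where
  "residue_map \<nu> red \<longleftrightarrow>
     (\<forall>x\<in>val_ring \<nu>. \<forall>y\<in>val_ring \<nu>. red (x + y) = red x + red y \<and> red (x * y) = red x * red y) \<and>
     red 1 = 1 \<and>
     (\<forall>x\<in>val_ring \<nu>. red x = 0 \<longleftrightarrow> (x = 0 \<or> \<nu> x > 0)) \<and>
     (\<forall>c. \<exists>x\<in>val_ring \<nu>. red x = c)"

definition fls_over :: "'a set \<Rightarrow> 'a::zero fls \<Rightarrow> bool" where
  "fls_over R f \<longleftrightarrow> (\<forall>n. fls_nth f n \<in> R)"

text \<open>Coefficientwise reduction of a Laurent series (zero coefficients are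
mapped to zero; for a ring homomorphism this is just coefficientwise application).\<close>
lift_definition fls_reduce :: "('a::zero \<Rightarrow> 'b::zero) \<Rightarrow> 'a fls \<Rightarrow> 'b fls" is
  "\<lambda>h f n. if f n = 0 then 0 else h (f n)"
  by (auto elim: eventually_mono)

end

theory Submission
  imports Defs
begin

text \<open>
  Over a field of characteristic \<open>\<noteq> 2\<close>, the complete quotients of \<open>s = \<surd>D\<close> have the form
  \<open>\<alpha>\<^sub>n = (P\<^sub>n + s) / Q\<^sub>n\<close> with \<open>Q\<^sub>n\<close> dividing \<open>D - P\<^sub>n\<^sup>2\<close>; their conjugates
  \<open>\<beta>\<^sub>n = (P\<^sub>n - s) / Q\<^sub>n\<close> satisfy \<open>ord \<alpha>\<^sub>n < 0 < ord \<beta>\<^sub>n\<close> for \<open>n \<ge> 1\<close>. If some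
  partial quotient \<open>a\<^sub>n\<close> (\<open>n \<ge> 1\<close>) has degree \<open>\<ge> 2\<close>, then \<open>(\<alpha>\<^sub>n - \<beta>\<^sub>n) Q\<^sub>n = 2s\<close> forces \<open>Q\<^sub>n\<close>
  to be constant, so \<open>a\<^sub>n = \<alpha>\<^sub>n + \<beta>\<^sub>n\<close> and the expansion is a palindrome around \<open>n\<close>, hence
  periodic. Conversely a periodic expansion is purely periodic from \<open>\<alpha>\<^sub>1\<close> on, and the last
  partial quotient of a period is \<open>2\<lfloor>s\<rfloor>\<close>, of degree 2. So \<open>s\<close> is periodic iff some \<open>a\<^sub>n\<close>,
  \<open>n \<ge> 1\<close>, has degree \<open>\<ge> 2\<close>; over \<open>K\<close> all of them therefore have degree 1.

  As 2 and the leading coefficient of \<open>D\<close> are units, \<open>s\<close> is integral, and reduction commutes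
  with the expansion as long as the \<open>\<alpha>\<^sub>n\<close> stay integral. At the first non-integral
  \<open>\<alpha>\<^sub>n = 1/f\<close>, \<open>f\<close> has order 1 and a leading coefficient that is not a unit (otherwise
  \<open>1/f\<close> would be integral), so the reduction of \<open>f\<close> has order \<open>\<ge> 2\<close>: the reduced
  expansion gets a partial quotient of degree \<open>\<ge> 2\<close>. If instead all \<open>\<alpha>\<^sub>n\<close> are integral,
  every reduced partial quotient is the reduction of one of degree 1, and the reduced
  expansion is not periodic.
\<close>

section \<open>Laurent series in \<open>X\<^sup>-\<^sup>1\<close>\<close>

notation fls_nth (infixl \<open>$$\<close> 75)

abbreviation fls_poly :: "'a::field poly \<Rightarrow> 'a fls" where
  "fls_poly \<equiv> poly_to_fls_Xinv"

lemma fls_poly_nth: "fls_poly p $$ n = (if n \<le> 0 then coeff p (nat (- n)) else 0)"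
proof -
  have "fls_poly p $$ n = (\<Sum>i\<le>degree p. if i = nat (- n) \<and> n \<le> 0 then coeff p i else 0)"
    unfolding poly_to_fls_Xinv_def fls_nth_sum by (intro sum.cong) auto
  also have "\<dots> = (if n \<le> 0 then coeff p (nat (- n)) else 0)"
    by (auto simp: coeff_eq_0)
  finally show ?thesis .
qed

lemma fls_poly_pCons: "fls_poly (pCons a p) = fls_const a + fls_X_inv * fls_poly p"
  by (rule fls_eqI) (auto simp: fls_poly_nth fls_X_inv_times_conv_shift coeff_pCons nat_add_distrib
       split: nat.splits intro!: arg_cong[where f="coeff p"])

lemma fls_poly_const: "fls_poly [:c:] = fls_const c"
  by (rule fls_eqI) (auto simp: fls_poly_nth coeff_pCons split: nat.splits)

lemma fls_poly_0 [simp]: "fls_poly 0 = 0"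
  and fls_poly_1 [simp]: "fls_poly 1 = 1"
  using fls_poly_const[of 0] fls_poly_const[of 1] by (simp_all add: one_pCons)

lemma fls_poly_add: "fls_poly (p + q) = fls_poly p + fls_poly q"
  and fls_poly_diff: "fls_poly (p - q) = fls_poly p - fls_poly q"
  and fls_poly_uminus: "fls_poly (- p) = - fls_poly p"
  and fls_poly_smult: "fls_poly (smult c p) = fls_const c * fls_poly p"
  by (rule fls_eqI; simp add: fls_poly_nth)+

lemma fls_poly_mult: "fls_poly (p * q) = fls_poly p * fls_poly q"
proof (induction p)
  case (pCons a p)
  have "fls_poly (pCons a p * q) = fls_const a * fls_poly q + fls_X_inv * fls_poly (p * q)"
    by (simp add: fls_poly_add fls_poly_smult fls_poly_pCons)
  also have "\<dots> = fls_poly (pCons a p) * fls_poly q"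
    using pCons by (simp add: fls_poly_pCons algebra_simps)
  finally show ?case .
qed simp

lemma fls_poly_power: "fls_poly (p ^ n) = fls_poly p ^ n"
  by (induction n) (simp_all add: fls_poly_mult)

lemma fls_poly_eq_iff [simp]: "fls_poly p = fls_poly q \<longleftrightarrow> p = q"
proof
  assume "fls_poly p = fls_poly q"
  hence "fls_poly p $$ (- int i) = fls_poly q $$ (- int i)" for i by simp
  thus "p = q" by (simp add: fls_poly_nth poly_eq_iff)
qed simp

lemma fls_poly_eq_0_iff [simp]: "fls_poly p = 0 \<longleftrightarrow> p = 0"
  using fls_poly_eq_iff[of p 0] by simp

lemma fls_subdegree_fls_poly: "p \<noteq> 0 \<Longrightarrow> fls_subdegree (fls_poly p) = - int (degree p)"
  by (rule fls_subdegree_eqI) (auto simp: fls_poly_nth coeff_eq_0)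

lemma fls_nth_fls_floor: "fls_floor f $$ n = (if n \<le> 0 then f $$ n else 0)"
  by transfer simp

lemma fls_floor_eq_fls_poly: "\<exists>p. fls_floor f = fls_poly p"
proof -
  obtain N :: nat where N: "\<forall>n>N. f $$ (- int n) = 0" by (rule fls_nth_vanishes_below_natE)
  define p where "p = Abs_poly (\<lambda>i. f $$ (- int i))"
  have "\<forall>\<^sub>\<infinity> i. f $$ (- int i) = 0" unfolding MOST_nat using N by blast
  hence "coeff p i = f $$ (- int i)" for i unfolding p_def by (simp add: Abs_poly_inverse)
  hence "fls_floor f = fls_poly p"
    by (intro fls_eqI) (simp add: fls_poly_nth fls_nth_fls_floor)
  thus ?thesis by blast
qed

lemma fls_floor_add: "fls_floor (f + g) = fls_floor f + fls_floor (g :: 'a::monoid_add fls)"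
  by (rule fls_eqI) (simp add: fls_nth_fls_floor)

lemma fls_floor_diff: "fls_floor (f - g) = fls_floor f - fls_floor (g :: 'a::group_add fls)"
  by (rule fls_eqI) (simp add: fls_nth_fls_floor)

lemma fls_floor_fls_poly [simp]: "fls_floor (fls_poly p) = fls_poly p"
  by (rule fls_eqI) (simp add: fls_nth_fls_floor fls_poly_nth)

lemma fls_floor_idem [simp]: "fls_floor (fls_floor f) = fls_floor f"
  by (rule fls_eqI) (simp add: fls_nth_fls_floor)

lemma fls_floor_eq_0_iff: "fls_floor f = 0 \<longleftrightarrow> f = 0 \<or> 0 < fls_subdegree f"
proof
  assume "fls_floor f = 0"
  hence "f $$ n = 0" if "n \<le> 0" for n
    using that fls_nth_fls_floor[of f n] by simp
  thus "f = 0 \<or> 0 < fls_subdegree f"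
    using fls_subdegree_geI[of f 1] by force
qed (auto simp: fls_eq_iff fls_nth_fls_floor)

lemma fls_subdegree_frac_pos:
  assumes "f \<noteq> fls_floor f" shows "0 < fls_subdegree (f - fls_floor f)"
proof -
  have "fls_floor (f - fls_floor f) = 0" by (simp add: fls_floor_diff)
  thus ?thesis using assms by (simp add: fls_floor_eq_0_iff)
qed

lemma fls_times_nth_bounded:
  fixes f g :: "'a::comm_ring_1 fls"
  assumes f: "\<And>i. i < a \<Longrightarrow> f $$ i = 0" and g: "\<And>i. i < b \<Longrightarrow> g $$ i = 0"
  shows "(f * g) $$ n = (\<Sum>i=a..n - b. f $$ i * g $$ (n - i))"
proof (cases "f = 0 \<or> g = 0")
  case False
  hence "a \<le> fls_subdegree f" "b \<le> fls_subdegree g"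
    using f g nth_fls_subdegree_nonzero by (meson not_le)+
  hence "(\<Sum>i=fls_subdegree f..n - fls_subdegree g. f $$ i * g $$ (n - i)) =
         (\<Sum>i=a..n - b. f $$ i * g $$ (n - i))"
    by (intro sum.mono_neutral_left) auto
  thus ?thesis by (simp add: fls_times_nth(2))
qed auto

lemma fls_times_nth_subdegree:
  fixes f g :: "'a::comm_ring_1 fls"
  shows "(f * g) $$ (fls_subdegree f + fls_subdegree g + int j) =
         (\<Sum>t\<le>j. f $$ (fls_subdegree f + int t) * g $$ (fls_subdegree g + int (j - t)))"
proof -
  let ?df = "fls_subdegree f" and ?dg = "fls_subdegree g"
  have "(f * g) $$ (?df + ?dg + int j) =
        (\<Sum>i=?df..?df + int j. f $$ i * g $$ (?df + ?dg + int j - i))"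
    by (simp add: fls_times_nth(2))
  also have "\<dots> = (\<Sum>t\<le>j. f $$ (?df + int t) * g $$ (?df + ?dg + int j - (?df + int t)))"
    by (rule sum.reindex_bij_witness[of _ "\<lambda>t. ?df + int t" "\<lambda>i. nat (i - ?df)"]) auto
  also have "\<dots> = (\<Sum>t\<le>j. f $$ (?df + int t) * g $$ (?dg + int (j - t)))"
    by (rule sum.cong) (auto simp: of_nat_diff)
  finally show ?thesis .
qed

section \<open>Continued fractions of Laurent series\<close>

lemma cf_alpha_unfold: "cf_alpha \<alpha> n = fls_floor (cf_alpha \<alpha> n) + inverse (cf_alpha \<alpha> (Suc n))"
  by simp

lemma cf_periodicI:
  assumes eq: "cf_alpha \<alpha> (m + l) = cf_alpha \<alpha> m" and l: "0 < l"
  shows "cf_periodic \<alpha>"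
proof -
  have shift: "cf_alpha \<alpha> (m + j + l) = cf_alpha \<alpha> (m + j)" for j
  proof (induction j)
    case 0 show ?case using eq by simp
  next
    case (Suc j)
    have "m + Suc j + l = Suc (m + j + l)" by simp
    thus ?case using Suc.IH by (simp only: cf_alpha.simps add_Suc_right)
  qed
  have "cf_quot \<alpha> n = cf_quot \<alpha> (n + l)" if "m \<le> n" for n
    using that shift[of "n - m"] by (simp add: cf_quot_def)
  thus ?thesis using l unfolding cf_periodic_def by (metis Suc_leI One_nat_def)
qed

text \<open>Two expansions with the same partial quotients and complete quotients of negative order
  coincide: the order of their difference grows by at least 2 at each step.\<close>

lemma cf_expansion_unique:
  fixes x y :: "nat \<Rightarrow> 'a::field fls"
  assumes x: "\<And>j. x j = c j + inverse (x (Suc j))" and y: "\<And>j. y j = c j + inverse (y (Suc j))"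
    and x_neg: "\<And>j. fls_subdegree (x (Suc j)) < 0" and y_neg: "\<And>j. fls_subdegree (y (Suc j)) < 0"
  shows "x 0 = y 0"
proof (rule ccontr)
  have nz: "x (Suc j) \<noteq> 0" "y (Suc j) \<noteq> 0" for j
    using x_neg[of j] y_neg[of j] by auto
  have diff: "x j - y j = inverse (x (Suc j)) - inverse (y (Suc j))" for j
    using x[of j] y[of j] by simp
  have "int N \<le> fls_subdegree (x j - y j)" if "x j \<noteq> y j" for N j
    using that
  proof (induction N arbitrary: j)
    case 0
    have "0 < min (fls_subdegree (inverse (x (Suc j)))) (fls_subdegree (inverse (y (Suc j))))"
      using x_neg[of j] y_neg[of j] by simp
    also have "\<dots> \<le> fls_subdegree (x j - y j)"
      using 0 diff[of j] fls_subdegree_minus by (metis eq_iff_diff_eq_0)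
    finally show ?case by simp
  next
    case (Suc N)
    have ne: "x (Suc j) \<noteq> y (Suc j)" using Suc.prems x[of j] y[of j] by auto
    have "x j - y j = (y (Suc j) - x (Suc j)) * (inverse (x (Suc j)) * inverse (y (Suc j)))"
      using diff[of j] nz[of j] by (simp add: field_simps)
    hence "fls_subdegree (x j - y j) =
        fls_subdegree (x (Suc j) - y (Suc j)) - fls_subdegree (x (Suc j)) - fls_subdegree (y (Suc j))"
      using ne nz[of j] by (simp add: fls_subdegree_minus_sym)
    thus ?case using Suc.IH[OF ne] x_neg[of j] y_neg[of j] by simp
  qed
  moreover assume "x 0 \<noteq> y 0"
  ultimately have "int (nat (fls_subdegree (x 0 - y 0)) + 1) \<le> fls_subdegree (x 0 - y 0)"
    by blast
  thus False by (simp split: if_splits)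
qed

section \<open>The expansion of the square root of a quartic\<close>

text \<open>The conjugate complete quotients: the recursion for \<open>-\<alpha>\<close> driven by the partial quotients
  of \<open>\<alpha>\<close>. For \<open>\<alpha> = \<surd>D\<close> they are the images of the \<open>\<alpha>\<^sub>n\<close> under \<open>\<surd>D \<mapsto> -\<surd>D\<close>.\<close>

primrec cf_conj :: "'a::field fls \<Rightarrow> nat \<Rightarrow> 'a fls" where
  "cf_conj \<alpha> 0 = - \<alpha>"
| "cf_conj \<alpha> (Suc n) = inverse (cf_conj \<alpha> n - fls_floor (cf_alpha \<alpha> n))"

locale quartic_sqrt =
  fixes D :: "'a::field poly" and s :: "'a fls"
  assumes two_nonzero: "(2::'a) \<noteq> 0"
    and s_squared: "s ^ 2 = fls_poly D"
    and degree_D: "degree D = 4"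
    and D_not_square: "\<nexists>q. D = q ^ 2"
begin

abbreviation "\<alpha> \<equiv> cf_alpha s"
abbreviation "\<beta> \<equiv> cf_conj s"

lemma s_subdegree: "fls_subdegree s = -2"
proof -
  have "D \<noteq> 0" using degree_D by auto
  hence "fls_subdegree (s ^ 2) = -4" by (simp add: s_squared fls_subdegree_fls_poly degree_D)
  thus ?thesis by (simp add: fls_subdegree_pow)
qed

lemma s_lead_nonzero: "s $$ (-2) \<noteq> 0"
  using s_subdegree nth_fls_subdegree_nonzero[of s] by fastforce

text \<open>The denominators \<open>q\<close> with \<open>s q\<close> a polynomial form an ideal; since \<open>s\<^sup>2 = D\<close>, a generator
  of minimal degree divides its own numerator, which would make \<open>s\<close> a polynomial.\<close>

lemma s_irrational:
  assumes "q \<noteq> 0" shows "s * fls_poly q \<noteq> fls_poly p"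
proof
  let ?denom = "\<lambda>q. \<exists>p. q \<noteq> 0 \<and> s * fls_poly q = fls_poly p"
  assume "s * fls_poly q = fls_poly p"
  hence "?denom q" using assms by blast
  hence "\<exists>q0. ?denom q0 \<and> (\<forall>q. ?denom q \<longrightarrow> degree q0 \<le> degree q)"
    by (rule ex_has_least_nat)
  then obtain q0 where "?denom q0" and min: "\<And>q. ?denom q \<Longrightarrow> degree q0 \<le> degree q"
    by blast
  then obtain p0 where q0: "q0 \<noteq> 0" "s * fls_poly q0 = fls_poly p0" by blast
  have dvd: "q0 dvd x" if xy: "s * fls_poly x = fls_poly y" for x y
  proof (rule ccontr)
    assume ndvd: "\<not> q0 dvd x"
    hence r: "x mod q0 \<noteq> 0" by (simp add: mod_eq_0_iff_dvd)
    have "fls_poly (x mod q0) = fls_poly x - fls_poly q0 * fls_poly (x div q0)"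
      by (simp add: fls_poly_diff fls_poly_mult flip: minus_div_mult_eq_mod)
    hence "s * fls_poly (x mod q0) = fls_poly (y - p0 * (x div q0))"
      by (simp add: xy q0 fls_poly_diff fls_poly_mult right_diff_distrib flip: mult.assoc)
    hence "degree q0 \<le> degree (x mod q0)" using min r by blast
    thus False using degree_mod_less_degree[OF q0(1) ndvd] by simp
  qed
  have "s * fls_poly p0 = s ^ 2 * fls_poly q0"
    by (simp add: power2_eq_square mult.assoc flip: q0(2))
  also have "\<dots> = fls_poly (D * q0)" by (simp add: s_squared fls_poly_mult)
  finally obtain c where c: "p0 = q0 * c" using dvd by blast
  have "fls_poly q0 * (s - fls_poly c) = 0"
    using q0(2) by (simp add: c fls_poly_mult algebra_simps)
  hence "s = fls_poly c" using q0(1) by simp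
  hence "fls_poly D = fls_poly (c ^ 2)" using s_squared by (simp add: fls_poly_power)
  thus False using D_not_square by auto
qed

lemma s_not_poly: "s \<noteq> fls_poly p"
  using s_irrational[of 1 p] by simp

lemma s_plus_poly_nonzero: "s + fls_poly p \<noteq> 0" and s_minus_poly_nonzero: "s - fls_poly p \<noteq> 0"
  using s_not_poly[of "- p"] s_not_poly[of p] by (auto simp: fls_poly_uminus eq_neg_iff_add_eq_0)

lemma cf_repr_step:
  assumes Q: "Q \<noteq> 0" and dvd: "Q dvd D - P ^ 2"
  obtains P' Q' where "Q' \<noteq> 0" "Q' dvd D - P' ^ 2"
    "inverse ((fls_poly P + s) / fls_poly Q - fls_poly b) = (fls_poly P' + s) / fls_poly Q'"
    "inverse ((fls_poly P - s) / fls_poly Q - fls_poly b) = (fls_poly P' - s) / fls_poly Q'"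
proof -
  define P' where "P' = b * Q - P"
  have "D - P' ^ 2 = (D - P ^ 2) - Q * (b ^ 2 * Q - 2 * b * P)"
    by (simp add: P'_def power2_eq_square algebra_simps)
  hence "Q dvd D - P' ^ 2" using dvd by (metis dvd_diff dvd_triv_left)
  then obtain Q' where QQ': "D - P' ^ 2 = Q * Q'" by (rule dvdE)
  have Q': "Q' \<noteq> 0" using QQ' D_not_square by (metis eq_iff_diff_eq_0 mult_zero_right)
  have "Q' dvd D - P' ^ 2" using QQ' by simp
  have key: "s * s = fls_poly P' * fls_poly P' + fls_poly Q * fls_poly Q'"
    using arg_cong[OF QQ', of fls_poly]
    by (simp add: fls_poly_mult fls_poly_diff fls_poly_power power2_eq_square algebra_simps
        flip: s_squared)
  have P': "fls_poly P' = fls_poly b * fls_poly Q - fls_poly P"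
    by (simp add: P'_def fls_poly_mult fls_poly_diff)
  have "(fls_poly P + s) / fls_poly Q - fls_poly b = (s - fls_poly P') / fls_poly Q"
    using Q by (simp add: P' field_simps)
  hence "inverse ((fls_poly P + s) / fls_poly Q - fls_poly b) = fls_poly Q / (s - fls_poly P')"
    by simp
  also have "\<dots> = (fls_poly P' + s) / fls_poly Q'"
    using Q Q' s_minus_poly_nonzero[of P'] by (simp add: field_simps key)
  finally have plus:
    "inverse ((fls_poly P + s) / fls_poly Q - fls_poly b) = (fls_poly P' + s) / fls_poly Q'" .
  have "(fls_poly P - s) / fls_poly Q - fls_poly b = - ((s + fls_poly P') / fls_poly Q)"
    using Q by (simp add: P' field_simps)
  hence "inverse ((fls_poly P - s) / fls_poly Q - fls_poly b) = - (fls_poly Q / (s + fls_poly P'))"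
    by simp
  also have "\<dots> = (fls_poly P' - s) / fls_poly Q'"
    using Q Q' s_plus_poly_nonzero[of P'] by (simp add: field_simps key)
  finally show ?thesis using that Q' \<open>Q' dvd D - P' ^ 2\<close> plus by blast
qed

lemma cf_repr:
  "\<exists>P Q. Q \<noteq> 0 \<and> Q dvd D - P ^ 2 \<and>
     \<alpha> n = (fls_poly P + s) / fls_poly Q \<and> \<beta> n = (fls_poly P - s) / fls_poly Q"
proof (induction n)
  case 0
  show ?case by (intro exI[of _ 0] exI[of _ 1]) simp
next
  case (Suc n)
  then obtain P Q where Q: "Q \<noteq> 0" "Q dvd D - P ^ 2"
    and \<alpha>: "\<alpha> n = (fls_poly P + s) / fls_poly Q" and \<beta>: "\<beta> n = (fls_poly P - s) / fls_poly Q"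
    by blast
  obtain b where b: "fls_floor (\<alpha> n) = fls_poly b" using fls_floor_eq_fls_poly by blast
  obtain P' Q' where "Q' \<noteq> 0" "Q' dvd D - P' ^ 2"
    "inverse ((fls_poly P + s) / fls_poly Q - fls_poly b) = (fls_poly P' + s) / fls_poly Q'"
    "inverse ((fls_poly P - s) / fls_poly Q - fls_poly b) = (fls_poly P' - s) / fls_poly Q'"
    by (rule cf_repr_step[OF Q])
  thus ?case using \<alpha> \<beta> b by auto
qed

lemma cf_alpha_neq_floor: "\<alpha> n \<noteq> fls_floor (\<alpha> n)"
proof
  assume eq: "\<alpha> n = fls_floor (\<alpha> n)"
  obtain P Q where Q: "Q \<noteq> 0" and \<alpha>: "\<alpha> n = (fls_poly P + s) / fls_poly Q" using cf_repr by blast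
  obtain b where "fls_floor (\<alpha> n) = fls_poly b" using fls_floor_eq_fls_poly by blast
  hence "fls_poly P + s = fls_poly b * fls_poly Q" using eq Q \<alpha> by (simp add: divide_eq_eq)
  hence "s = fls_poly (b * Q - P)" by (simp add: fls_poly_mult fls_poly_diff algebra_simps)
  thus False using s_not_poly by blast
qed

lemma cf_alpha_subdegree_neg: "1 \<le> n \<Longrightarrow> fls_subdegree (\<alpha> n) < 0"
  using fls_subdegree_frac_pos[OF cf_alpha_neq_floor] by (cases n) auto

lemma cf_conj_subdegree_pos: "1 \<le> n \<Longrightarrow> 0 < fls_subdegree (\<beta> n)"
proof (induction n rule: dec_induct)
  case base
  have "(- s - fls_floor s) $$ (-2) = - 2 * s $$ (-2)" by (simp add: fls_nth_fls_floor)
  hence "(- s - fls_floor s) $$ (-2) \<noteq> 0" using two_nonzero s_lead_nonzero by simp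
  hence "fls_subdegree (- s - fls_floor s) \<le> -2" by (rule fls_subdegree_leI)
  thus ?case by simp
next
  case (step n)
  define k where "k = fls_subdegree (\<alpha> n)"
  have "k < 0" using cf_alpha_subdegree_neg step(1) by (simp add: k_def)
  hence "\<alpha> n \<noteq> 0" by (auto simp: k_def)
  hence "\<alpha> n $$ k \<noteq> 0" by (simp add: k_def)
  moreover have "(\<beta> n - fls_floor (\<alpha> n)) $$ k = - \<alpha> n $$ k"
    using step.IH \<open>k < 0\<close> by (simp add: fls_nth_fls_floor)
  ultimately have "fls_subdegree (\<beta> n - fls_floor (\<alpha> n)) \<le> k" by (intro fls_subdegree_leI) simp
  thus ?case using \<open>k < 0\<close> by simp
qed

lemma fls_floor_cf_conj: "1 \<le> n \<Longrightarrow> fls_floor (\<beta> n) = 0"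
  using cf_conj_subdegree_pos by (simp add: fls_floor_eq_0_iff)

lemma cf_conj_eq_if_cf_alpha_eq:
  assumes "\<alpha> i = \<alpha> j" shows "\<beta> i = \<beta> j"
proof -
  obtain P1 Q1 where 1: "Q1 \<noteq> 0"
    "\<alpha> i = (fls_poly P1 + s) / fls_poly Q1" "\<beta> i = (fls_poly P1 - s) / fls_poly Q1"
    using cf_repr by blast
  obtain P2 Q2 where 2: "Q2 \<noteq> 0"
    "\<alpha> j = (fls_poly P2 + s) / fls_poly Q2" "\<beta> j = (fls_poly P2 - s) / fls_poly Q2"
    using cf_repr by blast
  have "(fls_poly P1 + s) * fls_poly Q2 = (fls_poly P2 + s) * fls_poly Q1"
    using assms 1 2 by (simp add: frac_eq_eq)
  hence "s * fls_poly (Q2 - Q1) = fls_poly (P2 * Q1 - P1 * Q2)"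
    by (simp add: fls_poly_diff fls_poly_mult algebra_simps)
  hence "Q1 = Q2" using s_irrational[of "Q2 - Q1"] by auto
  hence "P1 = P2" using assms 1 2 by simp
  thus ?thesis using 1 2 \<open>Q1 = Q2\<close> by simp
qed

text \<open>A partial quotient of degree \<open>\<ge> 2\<close> forces the denominator \<open>Q\<^sub>n\<close> to be constant, because
  \<open>(\<alpha>\<^sub>n - \<beta>\<^sub>n) Q\<^sub>n = 2s\<close> has order \<open>-2\<close>.\<close>

lemma floor_cf_alpha_eq_plus_conj:
  assumes n: "1 \<le> n" and large: "fls_subdegree (\<alpha> n) \<le> -2"
  shows "fls_floor (\<alpha> n) = \<alpha> n + \<beta> n"
proof -
  obtain P Q where Q: "Q \<noteq> 0"
    and \<alpha>: "\<alpha> n = (fls_poly P + s) / fls_poly Q" and \<beta>: "\<beta> n = (fls_poly P - s) / fls_poly Q"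
    using cf_repr by blast
  define k where "k = fls_subdegree (\<alpha> n)"
  have "\<alpha> n \<noteq> 0" using large by auto
  hence "(\<alpha> n - \<beta> n) $$ k \<noteq> 0"
    using cf_conj_subdegree_pos[OF n] large by (simp add: k_def)
  hence diff: "\<alpha> n - \<beta> n \<noteq> 0" "fls_subdegree (\<alpha> n - \<beta> n) \<le> -2"
    using fls_subdegree_leI[of "\<alpha> n - \<beta> n" k] large k_def by (auto intro: fls_nonzeroI)
  have "(2::'a fls) \<noteq> 0" using two_nonzero fls_const_eq_0_iff[of "2::'a"] by simp
  moreover have "s \<noteq> 0" using s_lead_nonzero by (rule fls_nonzeroI)
  ultimately have "fls_subdegree (2 * s) = -2" by (simp add: s_subdegree)
  moreover have "(\<alpha> n - \<beta> n) * fls_poly Q = 2 * s" using Q by (simp add: \<alpha> \<beta> field_simps)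
  ultimately have "fls_subdegree (\<alpha> n - \<beta> n) - int (degree Q) = -2"
    using diff(1) Q
    by (metis fls_poly_eq_0_iff fls_subdegree_fls_poly fls_subdegree_mult uminus_add_conv_diff add.commute)
  hence "degree Q = 0" using diff(2) by simp
  then obtain q where Qq: "Q = [:q:]" and q: "q \<noteq> 0" using Q by (metis degree_0_id pCons_0_0)
  have "\<alpha> n + \<beta> n = fls_poly (smult (2 / q) P)"
    using q by (simp add: \<alpha> \<beta> Qq fls_poly_const fls_poly_smult fls_inverse_const field_simps
        flip: fls_const_divide_const)
  hence "fls_floor (\<alpha> n + \<beta> n) = \<alpha> n + \<beta> n" by simp
  thus ?thesis using fls_floor_cf_conj[OF n] by (simp add: fls_floor_add)
qed

lemma floor_cf_alpha_via_conj: "1 \<le> j \<Longrightarrow> fls_floor (\<alpha> j) = fls_floor (- inverse (\<beta> (Suc j)))"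
  using fls_floor_cf_conj[of j] by (simp add: fls_floor_diff)

lemma cf_alpha_reflect:
  assumes n: "1 \<le> n" and floor: "fls_floor (\<alpha> n) = \<alpha> n + \<beta> n" and "i \<le> n"
  shows "\<alpha> (n + i) = - inverse (\<beta> (Suc n - i))"
  using \<open>i \<le> n\<close>
proof (induction i)
  case 0
  show ?case using floor by simp
next
  case (Suc i)
  have "1 \<le> n - i" using Suc.prems by simp
  have IH: "\<alpha> (n + i) = - inverse (\<beta> (Suc (n - i)))" using Suc by (simp add: Suc_diff_le)
  hence "fls_floor (\<alpha> (n + i)) = fls_floor (\<alpha> (n - i))"
    by (simp only: floor_cf_alpha_via_conj[OF \<open>1 \<le> n - i\<close>])
  thus ?case using IH Suc.prems by (simp add: Suc_diff_Suc)
qed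

lemma large_quotient_imp_periodic:
  assumes n: "1 \<le> n" and large: "fls_subdegree (\<alpha> n) \<le> -2"
  shows "cf_periodic s"
proof (rule cf_periodicI)
  have "\<alpha> (n + n) = s + fls_floor s"
    using cf_alpha_reflect[OF n floor_cf_alpha_eq_plus_conj[OF n large], of n] by simp
  thus "\<alpha> (1 + (n + n)) = \<alpha> 1" by (simp add: fls_floor_add)
qed (use n in simp)

lemma cf_alpha_eq_pred:
  assumes eq: "\<alpha> (Suc i) = \<alpha> (Suc j)" and "1 \<le> i" "1 \<le> j"
  shows "\<alpha> i = \<alpha> j"
proof -
  have "fls_floor (\<alpha> i) = fls_floor (- inverse (\<beta> (Suc i)))"
    using \<open>1 \<le> i\<close> by (rule floor_cf_alpha_via_conj)
  also have "\<beta> (Suc i) = \<beta> (Suc j)" using eq by (rule cf_conj_eq_if_cf_alpha_eq)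
  also have "fls_floor (- inverse (\<beta> (Suc j))) = fls_floor (\<alpha> j)"
    using \<open>1 \<le> j\<close> by (rule floor_cf_alpha_via_conj[symmetric])
  finally have "fls_floor (\<alpha> i) = fls_floor (\<alpha> j)" .
  thus ?thesis using eq cf_alpha_unfold by metis
qed

lemma cf_alpha_eq_shift_to_1: "\<alpha> (i + l) = \<alpha> i \<Longrightarrow> 1 \<le> i \<Longrightarrow> \<alpha> (Suc l) = \<alpha> 1"
proof (induction i)
  case (Suc i)
  show ?case
  proof (cases "i = 0")
    case False
    have "\<alpha> (Suc (i + l)) = \<alpha> (Suc i)" using Suc.prems(1) by simp
    hence "\<alpha> (i + l) = \<alpha> i" by (rule cf_alpha_eq_pred) (use False in simp_all)
    thus ?thesis using Suc.IH False by simp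
  qed (use Suc.prems in \<open>simp del: cf_alpha.simps\<close>)
qed simp

lemma periodic_imp_purely_periodic:
  assumes "cf_periodic s" shows "\<exists>l\<ge>1. \<alpha> (Suc l) = \<alpha> 1"
proof -
  obtain m l where l: "1 \<le> l" and per: "\<And>n. m \<le> n \<Longrightarrow> cf_quot s n = cf_quot s (n + l)"
    using assms unfolding cf_periodic_def by blast
  have "\<alpha> (Suc m + l + 0) = \<alpha> (Suc m + 0)"
  proof (rule cf_expansion_unique)
    show "\<alpha> (Suc m + l + j) = fls_floor (\<alpha> (Suc m + j)) + inverse (\<alpha> (Suc m + l + Suc j))" for j
      using per[of "Suc m + j"] by (simp add: cf_quot_def add_ac)
    show "\<alpha> (Suc m + j) = fls_floor (\<alpha> (Suc m + j)) + inverse (\<alpha> (Suc m + Suc j))" for j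
      by simp
    show "fls_subdegree (\<alpha> (Suc m + l + Suc j)) < 0" "fls_subdegree (\<alpha> (Suc m + Suc j)) < 0" for j
      by (rule cf_alpha_subdegree_neg, simp)+
  qed
  hence "\<alpha> (Suc l) = \<alpha> 1" by (intro cf_alpha_eq_shift_to_1[of "Suc m"]) (simp_all add: add_ac)
  thus ?thesis using l by blast
qed

lemma floor_cf_alpha_period_end:
  assumes l: "1 \<le> l" and "\<alpha> (Suc l) = \<alpha> 1"
  shows "fls_floor (\<alpha> l) = fls_floor s + fls_floor s"
proof -
  have "\<beta> (Suc l) = \<beta> 1" using assms(2) by (rule cf_conj_eq_if_cf_alpha_eq)
  hence "inverse (\<beta> l - fls_floor (\<alpha> l)) = inverse (- s - fls_floor s)"
    by (simp only: cf_conj.simps cf_alpha.simps One_nat_def)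
  hence "\<beta> l - fls_floor (\<alpha> l) = - (s + fls_floor s)" by (simp add: inverse_eq_imp_eq)
  hence "fls_floor (\<alpha> l) - \<beta> l = s + fls_floor s" by (metis minus_diff_eq minus_minus)
  thus ?thesis
    using fls_floor_cf_conj[OF l] by (metis fls_floor_add fls_floor_diff fls_floor_idem diff_zero)
qed

lemma periodic_imp_large_quotient:
  assumes "cf_periodic s" shows "\<exists>n\<ge>1. fls_subdegree (\<alpha> n) \<le> -2"
proof -
  obtain l where l: "1 \<le> l" "\<alpha> (Suc l) = \<alpha> 1"
    using periodic_imp_purely_periodic[OF assms] by blast
  have "\<alpha> l $$ (-2) = fls_floor (\<alpha> l) $$ (-2)" by (simp add: fls_nth_fls_floor)
  also have "\<dots> = 2 * s $$ (-2)" by (simp add: floor_cf_alpha_period_end[OF l] fls_nth_fls_floor)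
  finally have "\<alpha> l $$ (-2) \<noteq> 0" using two_nonzero s_lead_nonzero by simp
  thus ?thesis using l fls_subdegree_leI by blast
qed

lemma cf_alpha_subdegree_if_not_periodic:
  assumes "\<not> cf_periodic s" and "1 \<le> n" shows "fls_subdegree (\<alpha> n) = -1"
  using assms large_quotient_imp_periodic[of n] cf_alpha_subdegree_neg[of n] by force

end

section \<open>Valuation rings and reduction of Laurent series\<close>

lemma fls_reduce_nth: "h 0 = 0 \<Longrightarrow> fls_reduce h f $$ n = h (f $$ n)"
  by transfer auto

locale residue_reduction =
  fixes \<nu> :: "'a::field \<Rightarrow> int" and red :: "'a \<Rightarrow> 'b::field"
  assumes valuation: "discrete_valuation \<nu>" and residue: "residue_map \<nu> red"
begin

abbreviation "\<O> \<equiv> val_ring \<nu>"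

lemma valuation_mult: "x \<noteq> 0 \<Longrightarrow> y \<noteq> 0 \<Longrightarrow> \<nu> (x * y) = \<nu> x + \<nu> y"
  using valuation unfolding discrete_valuation_def by blast

lemma valuation_add:
  "x \<noteq> 0 \<Longrightarrow> y \<noteq> 0 \<Longrightarrow> x + y \<noteq> 0 \<Longrightarrow> min (\<nu> x) (\<nu> y) \<le> \<nu> (x + y)"
  using valuation unfolding discrete_valuation_def by blast

lemma valuation_1: "\<nu> 1 = 0"
  using valuation_mult[of 1 1] by simp

lemma val_ring_0 [simp]: "0 \<in> \<O>" and val_ring_1 [simp]: "1 \<in> \<O>"
  by (auto simp: val_ring_def valuation_1)

lemma val_ring_add: "x \<in> \<O> \<Longrightarrow> y \<in> \<O> \<Longrightarrow> x + y \<in> \<O>"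
  using valuation_add[of x y] by (fastforce simp: val_ring_def)

lemma val_ring_mult: "x \<in> \<O> \<Longrightarrow> y \<in> \<O> \<Longrightarrow> x * y \<in> \<O>"
  using valuation_mult[of x y] by (cases "x = 0 \<or> y = 0") (auto simp: val_ring_def)

lemma val_ring_uminus: "x \<in> \<O> \<Longrightarrow> - x \<in> \<O>"
proof -
  have "\<nu> (-1) = 0" using valuation_mult[of "-1" "-1"] valuation_1 by simp
  hence "-1 \<in> \<O>" by (simp add: val_ring_def)
  thus "x \<in> \<O> \<Longrightarrow> - x \<in> \<O>" using val_ring_mult[of "-1" x] by simp
qed

lemma val_ring_diff: "x \<in> \<O> \<Longrightarrow> y \<in> \<O> \<Longrightarrow> x - y \<in> \<O>"
  using val_ring_add[OF _ val_ring_uminus, of x y] by simp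

lemma val_ring_sum: "(\<And>i. i \<in> S \<Longrightarrow> f i \<in> \<O>) \<Longrightarrow> sum f S \<in> \<O>"
  by (induction S rule: infinite_finite_induct) (auto simp: val_ring_add)

lemma val_ring_divide_unit: "x \<in> \<O> \<Longrightarrow> u \<noteq> 0 \<Longrightarrow> \<nu> u = 0 \<Longrightarrow> x / u \<in> \<O>"
  using valuation_mult[of "x / u" u] by (cases "x = 0") (auto simp: val_ring_def)

lemma red_add: "x \<in> \<O> \<Longrightarrow> y \<in> \<O> \<Longrightarrow> red (x + y) = red x + red y"
  and red_mult: "x \<in> \<O> \<Longrightarrow> y \<in> \<O> \<Longrightarrow> red (x * y) = red x * red y"
  and red_1: "red 1 = 1"
  and red_eq_0_iff: "x \<in> \<O> \<Longrightarrow> red x = 0 \<longleftrightarrow> x = 0 \<or> 0 < \<nu> x"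
  using residue unfolding residue_map_def by blast+

lemma red_0 [simp]: "red 0 = 0"
  using red_eq_0_iff[of 0] by simp

lemma red_uminus: "x \<in> \<O> \<Longrightarrow> red (- x) = - red x"
  using red_add[OF _ val_ring_uminus, of x x] by (simp add: eq_neg_iff_add_eq_0 add.commute)

lemma red_diff: "x \<in> \<O> \<Longrightarrow> y \<in> \<O> \<Longrightarrow> red (x - y) = red x - red y"
  using red_add[OF _ val_ring_uminus, of x y] red_uminus[of y] by simp

lemma red_sum: "(\<And>i. i \<in> S \<Longrightarrow> f i \<in> \<O>) \<Longrightarrow> red (sum f S) = (\<Sum>i\<in>S. red (f i))"
  by (induction S rule: infinite_finite_induct) (auto simp: red_add val_ring_sum)

lemma two_unit:
  assumes "(2::'b) \<noteq> 0" shows "(2::'a) \<noteq> 0" "\<nu> 2 = 0"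
proof -
  have "(2::'a) \<in> \<O>" using val_ring_add[of 1 1] by simp
  moreover have "red 2 \<noteq> 0" using assms red_add[of 1 1] red_1 by simp
  ultimately show "(2::'a) \<noteq> 0" "\<nu> 2 = 0" using red_eq_0_iff by (auto simp: val_ring_def)
qed

lemma fls_over_diff: "fls_over \<O> f \<Longrightarrow> fls_over \<O> g \<Longrightarrow> fls_over \<O> (f - g)"
  and fls_over_floor: "fls_over \<O> f \<Longrightarrow> fls_over \<O> (fls_floor f)"
  by (simp_all add: fls_over_def val_ring_diff fls_nth_fls_floor)

lemma fls_overI_subdegree:
  assumes "\<And>j. f $$ (fls_subdegree f + int j) \<in> \<O>" shows "fls_over \<O> f"
  unfolding fls_over_def
proof
  fix n
  show "f $$ n \<in> \<O>"
  proof (cases "n < fls_subdegree f")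
    case False
    thus ?thesis using assms[of "nat (n - fls_subdegree f)"] by simp
  qed simp
qed

lemma fls_reduce_red_nth [simp]: "fls_reduce red f $$ n = red (f $$ n)"
  by (simp add: fls_reduce_nth)

lemma fls_reduce_diff:
  "fls_over \<O> f \<Longrightarrow> fls_over \<O> g \<Longrightarrow> fls_reduce red (f - g) = fls_reduce red f - fls_reduce red g"
  by (rule fls_eqI) (simp add: fls_over_def red_diff)

lemma fls_reduce_floor: "fls_reduce red (fls_floor f) = fls_floor (fls_reduce red f)"
  by (rule fls_eqI) (simp add: fls_nth_fls_floor)

lemma fls_reduce_fls_poly:
  "(\<And>i. coeff p i \<in> \<O>) \<Longrightarrow> fls_reduce red (fls_poly p) = fls_poly (map_poly red p)"
  by (rule fls_eqI) (simp add: fls_poly_nth coeff_map_poly)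

lemma fls_reduce_mult:
  assumes f: "fls_over \<O> f" and g: "fls_over \<O> g"
  shows "fls_reduce red (f * g) = fls_reduce red f * fls_reduce red g"
proof (rule fls_eqI)
  fix n
  let ?df = "fls_subdegree f" and ?dg = "fls_subdegree g"
  have "fls_reduce red (f * g) $$ n = red (\<Sum>i=?df..n - ?dg. f $$ i * g $$ (n - i))"
    by (simp add: fls_times_nth(2))
  also have "\<dots> = (\<Sum>i=?df..n - ?dg. fls_reduce red f $$ i * fls_reduce red g $$ (n - i))"
    using f g by (subst red_sum) (auto simp: fls_over_def val_ring_mult red_mult)
  also have "\<dots> = (fls_reduce red f * fls_reduce red g) $$ n"
    by (rule fls_times_nth_bounded[symmetric]) simp_all
  finally show "fls_reduce red (f * g) $$ n = (fls_reduce red f * fls_reduce red g) $$ n" .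
qed

lemma fls_reduce_inverse:
  assumes f: "fls_over \<O> f" and fi: "fls_over \<O> (inverse f)"
  shows "fls_reduce red (inverse f) = inverse (fls_reduce red f)"
proof (cases "f = 0")
  case True
  have "fls_reduce red 0 = 0" by (rule fls_eqI) simp
  thus ?thesis using True by simp
next
  case False
  have "fls_reduce red 1 = 1" by (rule fls_eqI) (simp add: red_1)
  hence "fls_reduce red f * fls_reduce red (inverse f) = 1"
    using fls_reduce_mult[OF f fi] False by simp
  thus ?thesis by (rule inverse_unique[symmetric])
qed

lemma fls_over_of_mult:
  assumes f: "fls_over \<O> f" and unit: "\<nu> (f $$ fls_subdegree f) = 0" and "f \<noteq> 0"
    and fg: "fls_over \<O> (f * g)"
  shows "fls_over \<O> g"
proof (rule fls_overI_subdegree)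
  let ?df = "fls_subdegree f" and ?dg = "fls_subdegree g"
  fix j
  show "g $$ (?dg + int j) \<in> \<O>"
  proof (induction j rule: less_induct)
    case (less j)
    define R where "R = (\<Sum>t\<in>{1..j}. f $$ (?df + int t) * g $$ (?dg + int (j - t)))"
    have "{..j} = insert 0 {1..j}" by auto
    hence "(f * g) $$ (?df + ?dg + int j) = f $$ ?df * g $$ (?dg + int j) + R"
      by (simp add: fls_times_nth_subdegree R_def)
    hence eq: "g $$ (?dg + int j) = ((f * g) $$ (?df + ?dg + int j) - R) / f $$ ?df"
      using \<open>f \<noteq> 0\<close> by (simp add: eq_divide_eq)
    have IH: "g $$ (?dg + int (j - t)) \<in> \<O>" if "t \<in> {1..j}" for t
      using that by (intro less.IH) auto
    have "R \<in> \<O>" unfolding R_def using f IH by (intro val_ring_sum val_ring_mult) (auto simp: fls_over_def)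
    thus ?case using fg unit \<open>f \<noteq> 0\<close>
      by (simp add: eq fls_over_def val_ring_divide_unit val_ring_diff)
  qed
qed

lemma fls_over_inverse:
  assumes f: "fls_over \<O> f" and unit: "\<nu> (f $$ fls_subdegree f) = 0"
  shows "fls_over \<O> (inverse f)"
proof (cases "f = 0")
  case False
  show ?thesis by (rule fls_over_of_mult[OF f unit False]) (use False in \<open>simp add: fls_over_def\<close>)
qed (simp add: fls_over_def)

lemma fls_over_sqrt:
  assumes two: "(2::'b) \<noteq> 0" and sq: "fls_over \<O> (s * s)"
    and unit: "\<nu> ((s * s) $$ fls_subdegree (s * s)) = 0"
  shows "fls_over \<O> s"
proof (cases "s = 0")
  case False
  let ?d = "fls_subdegree s"
  have lead: "(s * s) $$ fls_subdegree (s * s) = s $$ ?d * s $$ ?d"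
    using False fls_times_nth_subdegree[of s s 0] by simp
  hence "\<nu> (s $$ ?d) = 0" using unit valuation_mult[of "s $$ ?d" "s $$ ?d"] False by simp
  hence u: "2 * s $$ ?d \<noteq> 0" "\<nu> (2 * s $$ ?d) = 0"
    using two_unit[OF two] valuation_mult[of 2 "s $$ ?d"] False by auto
  show ?thesis
  proof (rule fls_overI_subdegree)
    fix j
    show "s $$ (?d + int j) \<in> \<O>"
    proof (induction j rule: less_induct)
      case (less j)
      show ?case
      proof (cases "j = 0")
        case True
        thus ?thesis using \<open>\<nu> (s $$ ?d) = 0\<close> by (simp add: val_ring_def)
      next
        case False
        define h where "h t = s $$ (?d + int t) * s $$ (?d + int (j - t))" for t
        define M where "M = sum h {1..<j}"
        have split: "{..j} = insert 0 (insert j {1..<j})" using False by auto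
        have "(s * s) $$ (?d + ?d + int j) = sum h {..j}"
          unfolding h_def by (rule fls_times_nth_subdegree)
        also have "\<dots> = h 0 + (h j + M)" using False by (simp add: split M_def)
        also have "\<dots> = 2 * s $$ ?d * s $$ (?d + int j) + M" by (simp add: h_def)
        finally have "(s * s) $$ (?d + ?d + int j) = 2 * s $$ ?d * s $$ (?d + int j) + M" .
        hence eq: "s $$ (?d + int j) = ((s * s) $$ (?d + ?d + int j) - M) / (2 * s $$ ?d)"
          using u by (simp add: eq_divide_eq)
        have IH: "s $$ (?d + int t) \<in> \<O>" "s $$ (?d + int (j - t)) \<in> \<O>" if "t \<in> {1..<j}" for t
          using that by (intro less.IH; auto)+
        have "M \<in> \<O>" unfolding M_def h_def using IH by (intro val_ring_sum val_ring_mult) auto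
        thus ?thesis using sq u by (simp add: eq fls_over_def val_ring_divide_unit val_ring_diff)
      qed
    qed
  qed
qed (simp add: fls_over_def)

lemma fls_reduce_cf_alpha:
  "(\<And>i. i \<le> j \<Longrightarrow> fls_over \<O> (cf_alpha \<alpha> i)) \<Longrightarrow>
     fls_reduce red (cf_alpha \<alpha> j) = cf_alpha (fls_reduce red \<alpha>) j"
proof (induction j)
  case (Suc j)
  define f where "f = cf_alpha \<alpha> j - fls_floor (cf_alpha \<alpha> j)"
  have "fls_over \<O> (cf_alpha \<alpha> j)" using Suc.prems by simp
  hence f: "fls_over \<O> f"
    and "fls_reduce red f = cf_alpha (fls_reduce red \<alpha>) j - fls_floor (cf_alpha (fls_reduce red \<alpha>) j)"
    using Suc by (simp_all add: f_def fls_over_diff fls_over_floor fls_reduce_diff fls_reduce_floor)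
  moreover have "fls_over \<O> (inverse f)" using Suc.prems[of "Suc j"] by (simp add: f_def)
  ultimately show ?case using fls_reduce_inverse[OF f] by (simp add: f_def)
qed simp

lemma subdegree_reduce_ge_2:
  assumes f: "fls_over \<O> f" and sub: "fls_subdegree f = 1" and bad: "\<not> fls_over \<O> (inverse f)"
    and nz: "fls_reduce red f \<noteq> 0"
  shows "2 \<le> fls_subdegree (fls_reduce red f)"
proof (rule fls_subdegree_geI[OF nz])
  have "\<nu> (f $$ 1) \<noteq> 0" using fls_over_inverse[OF f] bad sub by auto
  moreover have "f $$ 1 \<in> \<O>" using f by (simp add: fls_over_def)
  ultimately have "red (f $$ 1) = 0" using red_eq_0_iff by (auto simp: val_ring_def)
  thus "fls_reduce red f $$ k = 0" if "k < 2" for k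
    using that sub by (cases "k = 1") auto
qed

end

section \<open>Reduction of the expansion of \<open>\<surd>D\<close>\<close>

locale quartic_sqrt_reduction = residue_reduction \<nu> red
  for \<nu> :: "'a::field \<Rightarrow> int" and red :: "'a \<Rightarrow> 'b::field" +
  fixes D :: "'a poly" and s :: "'a fls"
  assumes char_k: "(2::'b) \<noteq> 0"
    and D_integral: "\<And>i. coeff D i \<in> \<O>"
    and degree_D: "degree D = 4"
    and lead_coeff_unit: "\<nu> (lead_coeff D) = 0"
    and s_squared: "s ^ 2 = fls_poly D"
    and reduced_D_not_square: "\<nexists>q. map_poly red D = q ^ 2"
begin

lemma s_integral: "fls_over \<O> s"
proof (rule fls_over_sqrt[OF char_k])
  have "D \<noteq> 0" using degree_D by auto
  hence "fls_subdegree (s * s) = - 4"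
    by (simp add: s_squared fls_subdegree_fls_poly degree_D flip: power2_eq_square)
  thus "\<nu> ((s * s) $$ fls_subdegree (s * s)) = 0"
    using lead_coeff_unit by (simp add: s_squared fls_poly_nth degree_D flip: power2_eq_square)
  show "fls_over \<O> (s * s)"
    using D_integral by (simp add: s_squared fls_over_def fls_poly_nth flip: power2_eq_square)
qed

lemma reduced_s_squared: "fls_reduce red s ^ 2 = fls_poly (map_poly red D)"
proof -
  have "fls_reduce red s ^ 2 = fls_reduce red (s ^ 2)"
    by (simp add: power2_eq_square fls_reduce_mult[OF s_integral s_integral])
  thus ?thesis by (simp add: s_squared fls_reduce_fls_poly[OF D_integral])
qed

lemma degree_reduced_D: "degree (map_poly red D) = 4"
proof -
  have "D \<noteq> 0" using degree_D by auto
  hence "lead_coeff D \<noteq> 0" by simp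
  hence "red (lead_coeff D) \<noteq> 0" using red_eq_0_iff[OF D_integral] lead_coeff_unit by simp
  thus ?thesis using degree_D by (simp add: map_poly_degree_eq)
qed

lemma D_not_square: "\<nexists>q. D = q ^ 2"
proof
  assume "\<exists>q. D = q ^ 2"
  then obtain q where "D = q ^ 2" by blast
  hence "(s - fls_poly q) * (s + fls_poly q) = 0"
    using s_squared by (simp add: fls_poly_mult power2_eq_square algebra_simps)
  hence "s = fls_poly q \<or> s = fls_poly (- q)" by (auto simp: fls_poly_uminus eq_neg_iff_add_eq_0)
  then obtain q' where q': "s = fls_poly q'" by blast
  have "coeff q' i \<in> \<O>" for i
    using s_integral[unfolded fls_over_def q', rule_format, of "- int i"] by (simp add: fls_poly_nth)
  hence "fls_poly (map_poly red D) = fls_poly ((map_poly red q') ^ 2)"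
    using reduced_s_squared by (simp add: q' fls_reduce_fls_poly fls_poly_power)
  thus False using reduced_D_not_square by auto
qed

sublocale K: quartic_sqrt D s
  using two_unit[OF char_k] s_squared degree_D D_not_square by unfold_locales

sublocale k: quartic_sqrt "map_poly red D" "fls_reduce red s"
  using char_k reduced_s_squared degree_reduced_D reduced_D_not_square by unfold_locales

lemma bad_reduction_imp_reduced_periodic:
  assumes not_periodic: "\<not> cf_periodic s" and bad: "\<exists>n\<ge>1. \<not> fls_over \<O> (cf_alpha s n)"
  shows "cf_periodic (fls_reduce red s)"
proof -
  obtain n where n: "\<not> fls_over \<O> (cf_alpha s n)"
    and first: "\<And>i. i < n \<Longrightarrow> fls_over \<O> (cf_alpha s i)"
    using bad exists_least_iff[of "\<lambda>n. \<not> fls_over \<O> (cf_alpha s n)"] by blast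
  then obtain m where m: "n = Suc m" using s_integral by (cases n) auto
  define f where "f = cf_alpha s m - fls_floor (cf_alpha s m)"
  have "fls_over \<O> (cf_alpha s m)" using first m by simp
  hence f: "fls_over \<O> f" unfolding f_def by (blast intro: fls_over_diff fls_over_floor)
  have "fls_subdegree (inverse f) = -1"
    using K.cf_alpha_subdegree_if_not_periodic[OF not_periodic, of n] m by (simp add: f_def)
  hence "fls_subdegree f = 1" by simp
  moreover have "\<not> fls_over \<O> (inverse f)" using n m by (simp add: f_def)
  moreover have reduced_f: "fls_reduce red f =
      cf_alpha (fls_reduce red s) m - fls_floor (cf_alpha (fls_reduce red s) m)"
    using fls_reduce_cf_alpha[of m s] first m \<open>fls_over \<O> (cf_alpha s m)\<close>
    by (simp add: f_def fls_reduce_diff fls_over_floor fls_reduce_floor)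
  moreover have "fls_reduce red f \<noteq> 0"
    using k.cf_alpha_neq_floor[of m] by (simp only: reduced_f right_minus_eq not_False_eq_True)
  ultimately have "2 \<le> fls_subdegree (fls_reduce red f)" using f by (intro subdegree_reduce_ge_2)
  moreover have "cf_alpha (fls_reduce red s) n = inverse (fls_reduce red f)"
    by (simp only: m reduced_f cf_alpha.simps)
  ultimately have "fls_subdegree (cf_alpha (fls_reduce red s) n) \<le> -2"
    by (simp only: fls_inverse_subdegree)
  moreover have "1 \<le> n" using m by simp
  ultimately show ?thesis using k.large_quotient_imp_periodic by blast
qed

lemma reduced_periodic_imp_bad_reduction:
  assumes not_periodic: "\<not> cf_periodic s" and periodic: "cf_periodic (fls_reduce red s)"
  shows "\<exists>n\<ge>1. \<not> fls_over \<O> (cf_alpha s n)"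
proof (rule ccontr)
  assume "\<not> (\<exists>n\<ge>1. \<not> fls_over \<O> (cf_alpha s n))"
  hence good: "fls_over \<O> (cf_alpha s i)" for i using s_integral by (cases i) auto
  obtain n where n: "1 \<le> n" and large: "fls_subdegree (cf_alpha (fls_reduce red s) n) \<le> -2"
    using k.periodic_imp_large_quotient[OF periodic] by blast
  define k where "k = fls_subdegree (cf_alpha (fls_reduce red s) n)"
  have "cf_alpha (fls_reduce red s) n \<noteq> 0" using large by auto
  hence "cf_alpha (fls_reduce red s) n $$ k \<noteq> 0" by (simp add: k_def)
  moreover have "cf_alpha (fls_reduce red s) n = fls_reduce red (cf_alpha s n)"
    by (rule fls_reduce_cf_alpha[symmetric]) (rule good)
  moreover have "cf_alpha s n $$ k = 0"
    using K.cf_alpha_subdegree_if_not_periodic[OF not_periodic n] large k_def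
    by (intro fls_eq0_below_subdegree) linarith
  ultimately show False by simp
qed

end

theorem mainTheorem16:
  fixes \<nu> :: "'a::field \<Rightarrow> int" and red :: "'a \<Rightarrow> 'b::field"
    and D :: "'a poly" and s :: "'a fls"
  assumes val: "discrete_valuation \<nu>"
    and res: "residue_map \<nu> red"
    and char_k: "(2::'b) \<noteq> 0"
    and D_coeffs: "\<forall>i. coeff D i \<in> val_ring \<nu>"
    and D_deg: "degree D = 4"
    and lc_unit: "\<nu> (lead_coeff D) = 0"
    and lc_square: "\<exists>c. c ^ 2 = lead_coeff D"
    and s_sqrt: "s ^ 2 = poly_to_fls_Xinv D"
    and not_periodic: "\<not> cf_periodic s"
    and red_not_square: "\<not> (\<exists>q. map_poly red D = q ^ 2)"
  shows "(\<exists>n\<ge>1. \<not> fls_over (val_ring \<nu>) (cf_alpha s n))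
         \<longleftrightarrow> cf_periodic (fls_reduce red s)"
proof -
  interpret quartic_sqrt_reduction \<nu> red D s
    using assms by unfold_locales auto
  show ?thesis
    using bad_reduction_imp_reduced_periodic reduced_periodic_imp_bad_reduction not_periodic by blast
qed

end
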